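(* Let $X$ be a Banach space with $\dim X>1$, $x\in X$ and $T\in L(X)$. If there is a non-zero $f\in X^*$ such that $f(T^nx)=o(\|T^nx\|)$ as $n\to\infty$, then $x$ is not a supercyclic vector for $T$.
   Context: $x$ is a supercyclic vector for $T$ if $\{zT^nx:z\in\mathbb{K},n\in\mathbb{Z}_+\}$ is norm dense in $X$, where $\mathbb{K}\in\{\mathbb{R},\mathbb{C}\}$ is the scalar field. *)

theory Defs
  imports "HOL-Analysis.Analysis" "HOL-Library.Landau_Symbols"
begin

definition supercyclic_real :: "('a::real_normed_vector \<Rightarrow> 'a) \<Rightarrow> 'a \<Rightarrow> bool" where
  "supercyclic_real T x \<longleftrightarrow> closure {c *\<^sub>R (T ^^ n) x | c n. True} = UNIV"

text \<open>HOL has no class of complex normed spaces, so a complex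
  normed space is modelled as a real normed space together with a complex scalar
  multiplication extending the real one and compatible with the norm.\<close>
definition complex_scaling :: "(complex \<Rightarrow> 'a::real_normed_vector \<Rightarrow> 'a) \<Rightarrow> bool" where
  "complex_scaling sc \<longleftrightarrow>
     (\<forall>r y. sc (complex_of_real r) y = r *\<^sub>R y) \<and>
     (\<forall>a b y. sc (a * b) y = sc a (sc b y)) \<and>
     (\<forall>a b y. sc (a + b) y = sc a y + sc b y) \<and>
     (\<forall>a y z. sc a (y + z) = sc a y + sc a z) \<and>
     (\<forall>a y. norm (sc a y) = cmod a * norm y)"

definition supercyclic_complex ::
  "(complex \<Rightarrow> 'a::real_normed_vector \<Rightarrow> 'a) \<Rightarrow> ('a \<Rightarrow> 'a) \<Rightarrow> 'a \<Rightarrow> bool" where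
  "supercyclic_complex sc T x \<longleftrightarrow> closure {sc z ((T ^^ n) x) | z n. True} = UNIV"

end

theory Submission imports Defs begin

(* Only the orbit as a sequence u n = (T ^^ n) x matters, and the real and the complex statement are two instances of one argument
   about a scalar field 'k acting on a normed space by an isometric scaling sc (scaleR
   resp. the complex scaling).  Pick y with
   f y \<noteq> 0 and e = |f y| / (2 |y|); the cone U = {z. e |z| < |f z|} is open and nonempty.
   Since f (u n) = o(|u n|), eventually |f (u n)| \<le> e |u n|, and as the cone is invariant
   under scaling, the scaled orbit {sc c (u n)} meets U only on the finitely many lines
   through u 0, ..., u (N - 1).  These lines are closed proper subspaces, hence have empty
   interior, so their finite union has empty interior; but the closure of U \<inter> S contains
   the nonempty open U whenever S = {sc c (u n)} is dense. *)

text \<open>A subspace of a normed space with an interior point is the whole space: a ball around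
  that point, translated to the origin and rescaled, reaches every vector.\<close>
lemma subspace_interior_UNIV:
  fixes S :: "'a::real_normed_vector set"
  assumes S: "subspace S" and int: "interior S \<noteq> {}"
  shows "S = UNIV"
proof -
  obtain z r where r: "r > 0" "ball z r \<subseteq> S"
    using int mem_interior by blast
  have zS: "z \<in> S" using r by auto
  have "y \<in> S" for y
  proof (cases "y = 0")
    case True
    then show ?thesis using S subspace_0 by blast
  next
    case False
    define t where "t = r / (2 * norm y)"
    have t: "t > 0" using False r by (simp add: t_def)
    have "norm (t *\<^sub>R y) = r / 2" using False r by (simp add: t_def)
    then have "z + t *\<^sub>R y \<in> S" using r by (auto simp: dist_norm)
    then have "t *\<^sub>R y \<in> S" using S zS subspace_diff by fastforce
    then have "(1 / t) *\<^sub>R (t *\<^sub>R y) \<in> S" using S subspace_scale by blast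
    then show ?thesis using t by simp
  qed
  then show ?thesis by auto
qed

lemma interior_finite_Union_closed_empty:
  fixes F :: "'a::topological_space set set"
  assumes "finite F" "\<And>L. L \<in> F \<Longrightarrow> closed L \<and> interior L = {}"
  shows "interior (\<Union>F) = {}"
  using assms
proof (induction F rule: finite_induct)
  case empty
  then show ?case by simp
next
  case (insert L F)
  then show ?case
    using interior_closed_Un_empty_interior[of L "\<Union>F"] by simp
qed

text \<open>A dense set cannot meet a nonempty open set only inside finitely many closed
  nowhere dense sets: the closure of its trace on U contains U.\<close>
lemma dense_not_locally_in_finite_nowhere_dense:
  fixes S U :: "'a::topological_space set"
  assumes dense: "closure S = UNIV" and U: "open U" "U \<noteq> {}"
    and F: "finite F" "\<And>L. L \<in> F \<Longrightarrow> closed L \<and> interior L = {}"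
    and covered: "U \<inter> S \<subseteq> \<Union>F"
  shows False
proof -
  have closed_cover: "closed (\<Union>F)" using F by (intro closed_Union) auto
  have "U \<subseteq> closure (U \<inter> S)" using open_Int_closure_subset[OF U(1), of S] dense by simp
  also have "\<dots> \<subseteq> \<Union>F" using closure_minimal[OF covered closed_cover] .
  finally have "U \<subseteq> interior (\<Union>F)" using U(1) interior_maximal by blast
  then show False using interior_finite_Union_closed_empty[OF F] U(2) by auto
qed

text \<open>The line spanned by v under an isometric scaling by a complete scalar field is a
  closed subspace: it is the image of the scalar field under an isometric linear map.\<close>
lemma scalar_line_subspace:
  fixes sc :: "'k::real_normed_vector \<Rightarrow> 'a::real_normed_vector \<Rightarrow> 'a"
  assumes "bounded_linear (\<lambda>c. sc c v)"
  shows "subspace (range (\<lambda>c. sc c v))"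
  using assms bounded_linear.linear subspace_UNIV linear_subspace_image by blast

lemma scalar_line_closed:
  fixes sc :: "'k::{real_normed_vector,complete_space} \<Rightarrow> 'a::real_normed_vector \<Rightarrow> 'a"
  assumes lin: "bounded_linear (\<lambda>c. sc c v)" and isom: "\<And>c. norm (sc c v) = norm c * norm v"
  shows "closed (range (\<lambda>c. sc c v))"
proof (cases "v = 0")
  case True
  then have "range (\<lambda>c. sc c v) = {0}" using isom by auto
  then show ?thesis by simp
next
  case False
  have "complete ((\<lambda>c. sc c v) ` UNIV)"
    by (rule complete_isometric_image[where e = "norm v", OF _ subspace_UNIV lin])
       (use False isom complete_UNIV in auto)
  then show ?thesis by (rule complete_imp_closed)
qed

lemma scaled_outside_cone:
  fixes sc :: "'k::real_normed_field \<Rightarrow> 'a::real_normed_vector \<Rightarrow> 'a" and f :: "'a \<Rightarrow> 'k"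
  assumes f_hom: "f (sc c v) = c * f v" and isom: "norm (sc c v) = norm c * norm v"
    and outside: "norm (f v) \<le> e * norm v"
  shows "norm (f (sc c v)) \<le> e * norm (sc c v)"
proof -
  have "norm (f (sc c v)) = norm c * norm (f v)" by (simp add: f_hom norm_mult)
  also have "\<dots> \<le> norm c * (e * norm v)" using outside by (simp add: mult_left_mono)
  also have "\<dots> = e * norm (sc c v)" by (simp add: isom)
  finally show ?thesis .
qed

theorem scaled_sequence_not_dense:
  fixes sc :: "'k::{real_normed_field,banach} \<Rightarrow> 'a::real_normed_vector \<Rightarrow> 'a"
    and u :: "nat \<Rightarrow> 'a" and f :: "'a \<Rightarrow> 'k"
  assumes sc_lin: "\<And>v. bounded_linear (\<lambda>c. sc c v)"
    and sc_isom: "\<And>c v. norm (sc c v) = norm c * norm v"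
    and no_line: "\<And>v. range (\<lambda>c. sc c v) \<noteq> UNIV"
    and f: "bounded_linear f" and f_hom: "\<And>c y. f (sc c y) = c * f y" and fy: "f y \<noteq> 0"
    and small: "(\<lambda>n. norm (f (u n))) \<in> o[sequentially](\<lambda>n. norm (u n))"
  shows "closure {sc c (u n) | c n. True} \<noteq> UNIV"
proof
  assume dense: "closure {sc c (u n) | c n. True} = UNIV"
  define e where "e = norm (f y) / (2 * norm y)"
  have "y \<noteq> 0" using fy f by (auto simp: linear_simps)
  then have e: "e > 0" using fy by (simp add: e_def)
  define U where "U = {z. e * norm z < norm (f z)}"
  have "continuous_on UNIV f" using f by (rule linear_continuous_on)
  then have U_open: "open U"
    unfolding U_def by (intro open_Collect_less continuous_intros)
  have "e * norm y = norm (f y) / 2" using \<open>y \<noteq> 0\<close> by (simp add: e_def)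
  moreover have "norm (f y) > 0" using fy by simp
  ultimately have "e * norm y < norm (f y)" by linarith
  then have "y \<in> U" by (simp add: U_def)
  then have U_nonempty: "U \<noteq> {}" by auto
  obtain N where tail: "\<And>n. n \<ge> N \<Longrightarrow> norm (f (u n)) \<le> e * norm (u n)"
    using landau_o.smallD[OF small e] unfolding eventually_sequentially by auto
  define line where "line n = range (\<lambda>c. sc c (u n))" for n
  have covered: "U \<inter> {sc c (u n) | c n. True} \<subseteq> \<Union>(line ` {..<N})"
  proof
    fix w assume w: "w \<in> U \<inter> {sc c (u n) | c n. True}"
    then obtain c n where wc: "w = sc c (u n)" by auto
    have "n < N"
    proof (rule ccontr)
      assume "\<not> n < N"
      then have "norm (f (u n)) \<le> e * norm (u n)" using tail by simp
      then have "norm (f w) \<le> e * norm w"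
        unfolding wc
        by (rule scaled_outside_cone[where f = f and sc = sc and c = c and v = "u n", OF f_hom sc_isom])
      then show False using w by (simp add: U_def)
    qed
    then show "w \<in> \<Union>(line ` {..<N})" using wc by (auto simp: line_def)
  qed
  have nowhere_dense: "closed L \<and> interior L = {}" if L_line: "L \<in> line ` {..<N}" for L
  proof -
    obtain n where L: "L = range (\<lambda>c. sc c (u n))" using L_line unfolding line_def by blast
    have "interior L = {}"
      using subspace_interior_UNIV[OF scalar_line_subspace[OF sc_lin]] no_line unfolding L by blast
    then show ?thesis
      using scalar_line_closed[where sc = sc and v = "u n", OF sc_lin sc_isom] L by blast
  qed
  show False
    by (rule dense_not_locally_in_finite_nowhere_dense[OF dense U_open U_nonempty _ nowhere_dense covered])
       simp_all
qed

lemma complex_scaling_bounded_linear: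
  assumes "complex_scaling sc"
  shows "bounded_linear (\<lambda>c. sc c v)"
proof (rule bounded_linear_intro[where K = "norm v"])
  show "sc (a + b) v = sc a v + sc b v" for a b
    using assms by (simp add: complex_scaling_def)
  show "sc (r *\<^sub>R a) v = r *\<^sub>R sc a v" for r a
    using assms by (simp add: complex_scaling_def scaleR_conv_of_real)
  show "norm (sc a v) \<le> norm a * norm v" for a
    using assms by (simp add: complex_scaling_def)
qed

theorem lemma2p2:
  shows
  "(\<forall>(T :: 'a::banach \<Rightarrow> 'a) (x :: 'a) (f :: 'a \<Rightarrow> real).
      \<not> (\<exists>v. span {v} = (UNIV :: 'a set)) \<and>
      bounded_linear T \<and> bounded_linear f \<and> (\<exists>y. f y \<noteq> 0) \<and>
      (\<lambda>n. f ((T ^^ n) x)) \<in> o[sequentially](\<lambda>n. norm ((T ^^ n) x))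
      \<longrightarrow> \<not> supercyclic_real T x)
   \<and>
   (\<forall>(sc :: complex \<Rightarrow> 'b::banach \<Rightarrow> 'b) (T :: 'b \<Rightarrow> 'b) (x :: 'b) (f :: 'b \<Rightarrow> complex).
      complex_scaling sc \<and>
      \<not> (\<exists>v. \<forall>y. \<exists>c. y = sc c v) \<and>
      bounded_linear T \<and> (\<forall>a y. T (sc a y) = sc a (T y)) \<and>
      bounded_linear f \<and> (\<forall>a y. f (sc a y) = a * f y) \<and> (\<exists>y. f y \<noteq> 0) \<and>
      (\<lambda>n. f ((T ^^ n) x)) \<in> o[sequentially](\<lambda>n. norm ((T ^^ n) x))
      \<longrightarrow> \<not> supercyclic_complex sc T x)"
proof (intro conjI allI impI; elim conjE exE)
  fix T :: "'a \<Rightarrow> 'a" and x :: 'a and f :: "'a \<Rightarrow> real" and y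
  assume no_span: "\<not> (\<exists>v. span {v} = (UNIV :: 'a set))" and f: "bounded_linear f"
    and fy: "f y \<noteq> 0" and small: "(\<lambda>n. f ((T ^^ n) x)) \<in> o(\<lambda>n. norm ((T ^^ n) x))"
  have no_line: "range (\<lambda>c. c *\<^sub>R v) \<noteq> UNIV" for v :: 'a
    using no_span by (simp flip: span_singleton)
  have f_hom: "f (c *\<^sub>R z) = c * f z" for c z
    using f by (simp add: linear_simps)
  have "(\<lambda>n. norm (f ((T ^^ n) x))) \<in> o(\<lambda>n. norm ((T ^^ n) x))"
    using small by (subst (asm) landau_o.small.norm_iff [symmetric]) simp
  from scaled_sequence_not_dense[where sc = scaleR and u = "\<lambda>n. (T ^^ n) x",
      OF bounded_linear_scaleR_left _ no_line f f_hom fy this]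
  show "\<not> supercyclic_real T x"
    unfolding supercyclic_real_def by simp
next
  fix sc :: "complex \<Rightarrow> 'b \<Rightarrow> 'b" and T :: "'b \<Rightarrow> 'b" and x :: 'b and f :: "'b \<Rightarrow> complex" and y
  assume sc: "complex_scaling sc" and no_line: "\<not> (\<exists>v. \<forall>y. \<exists>c. y = sc c v)"
    and f: "bounded_linear f" and f_hom: "\<forall>a y. f (sc a y) = a * f y" and fy: "f y \<noteq> 0"
    and small: "(\<lambda>n. f ((T ^^ n) x)) \<in> o(\<lambda>n. norm ((T ^^ n) x))"
  have isom: "norm (sc c v) = norm c * norm v" for c v
    using sc by (simp add: complex_scaling_def)
  have proper: "range (\<lambda>c. sc c v) \<noteq> UNIV" for v
    using no_line by (metis UNIV_I rangeE)
  have "(\<lambda>n. norm (f ((T ^^ n) x))) \<in> o(\<lambda>n. norm ((T ^^ n) x))"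
    using small by (subst (asm) landau_o.small.norm_iff [symmetric]) simp
  from scaled_sequence_not_dense[where sc = sc and u = "\<lambda>n. (T ^^ n) x",
      OF complex_scaling_bounded_linear[OF sc] isom proper f _ fy this]
  show "\<not> supercyclic_complex sc T x"
    unfolding supercyclic_complex_def using f_hom by simp
qed

end
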